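(* Let $L$ be a linear continuum with endpoints, let $(f_i:i\in I)$ be an indiscernible sequence of single elements of $M_L$ of length at least $3$, let $i<j$ be elements of $I$, and let $(a,b)\in\mathrm{im}(f_i,f_j)$. Then either $(a,a)\in\mathrm{im}(f_i,f_j)$ or $(b,b)\in\mathrm{im}(f_i,f_j)$.
   Context: A linear continuum is a dense linear order with the least upper bound property; with endpoints means it has a least and greatest element. $M_L$ is the set of functions $f:L\to[0,1]$ that are nondecreasing, continuous in the order topology, with $\inf f=0$ and $\sup f=1$, with the sup metric, regarded as a metric structure in the language of binary predicates $\varphi_\alpha$ ($\alpha\in\mathbb{Q}\cap[0,1]$), where $\varphi_\alpha(f,g)=f(t)$ for any $t\in L$ with $f(t)+g(t)=\alpha$. $\mathrm{im}(f,g)=\{(f(t),g(t)):t\in L\}$. A sequence is indiscernible if every formula takes the same value on all increasing tuples from it. *)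

theory Defs
  imports "HOL-Analysis.Analysis"
begin

text \<open>A linear continuum with endpoints is modelled as a type L carrying its order
topology (class linorder_topology), which is densely ordered, has the least upper bound
property (conditionally complete), and has a least and a greatest element.\<close>

definition lin_cont_endpoints :: "'l::{linorder_topology, conditionally_complete_linorder} itself \<Rightarrow> bool" where
  "lin_cont_endpoints _ \<longleftrightarrow>
     (\<forall>x y::'l. x < y \<longrightarrow> (\<exists>z. x < z \<and> z < y)) \<and>
     (\<exists>lo hi::'l. \<forall>x. lo \<le> x \<and> x \<le> hi)"

definition M_space :: "('l::linorder_topology \<Rightarrow> real) set" where
  "M_space = {f. mono f \<and> continuous_on UNIV f \<and> (INF t. f t) = 0 \<and> (SUP t. f t) = 1}"

definition phiML :: "real \<Rightarrow> ('l \<Rightarrow> real) \<Rightarrow> ('l \<Rightarrow> real) \<Rightarrow> real" where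
  "phiML \<alpha> f g = f (SOME t. f t + g t = \<alpha>)"

definition distML :: "('l \<Rightarrow> real) \<Rightarrow> ('l \<Rightarrow> real) \<Rightarrow> real" where
  "distML f g = (SUP t. \<bar>f t - g t\<bar>)"

definition im :: "('l \<Rightarrow> real) \<Rightarrow> ('l \<Rightarrow> real) \<Rightarrow> (real \<times> real) set" where
  "im f g = {(f t, g t) | t. True}"

text \<open>Connectives: arbitrary continuous functions u : [0,1]^n -> [0,1] (applied to the values
of n subformulas, encoded as a function on nat that is 0 beyond n).\<close>

datatype form =
    Phi rat nat nat
  | Dist nat nat
  | Conn "(nat \<Rightarrow> real) \<Rightarrow> real" "form list"
  | FSup nat form
  | FInf nat form

fun eval :: "form \<Rightarrow> (nat \<Rightarrow> ('l::linorder_topology \<Rightarrow> real)) \<Rightarrow> real" where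
  "eval (Phi \<alpha> x y) e = phiML (real_of_rat \<alpha>) (e x) (e y)"
| "eval (Dist x y) e = distML (e x) (e y)"
| "eval (Conn u ps) e =
     (let vs = map (\<lambda>p. eval p e) ps in u (\<lambda>k. if k < length vs then vs ! k else 0))"
| "eval (FSup x p) e = (SUP g\<in>M_space. eval p (e(x := g)))"
| "eval (FInf x p) e = (INF g\<in>M_space. eval p (e(x := g)))"

fun fv :: "form \<Rightarrow> nat set" where
  "fv (Phi \<alpha> x y) = {x, y}"
| "fv (Dist x y) = {x, y}"
| "fv (Conn u ps) = \<Union> (set (map fv ps))"
| "fv (FSup x p) = fv p - {x}"
| "fv (FInf x p) = fv p - {x}"

fun wf_form :: "form \<Rightarrow> bool" where
  "wf_form (Phi \<alpha> x y) = (0 \<le> \<alpha> \<and> \<alpha> \<le> 1)"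
| "wf_form (Dist x y) = True"
| "wf_form (Conn u ps) =
     (continuous_on {v. \<forall>k. v k \<in> {0..1}} u \<and> (\<forall>v. (\<forall>k. v k \<in> {0..1}) \<longrightarrow> u v \<in> {0..1})
      \<and> list_all wf_form ps)"
| "wf_form (FSup x p) = wf_form p"
| "wf_form (FInf x p) = wf_form p"

definition indiscernible :: "('i::linorder \<Rightarrow> ('l::linorder_topology \<Rightarrow> real)) \<Rightarrow> bool" where
  "indiscernible f \<longleftrightarrow>
     (\<forall>\<phi> n (ii :: nat \<Rightarrow> 'i) js. wf_form \<phi> \<and> fv \<phi> \<subseteq> {..<n} \<and>
        strict_mono_on {..<n} ii \<and> strict_mono_on {..<n} js \<longrightarrow>
        eval \<phi> (\<lambda>k. f (ii k)) = eval \<phi> (\<lambda>k. f (js k)))"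

end

theory Submission
  imports Defs
begin

text \<open>The image \<open>im f g\<close> of two elements of \<open>M\<^sub>L\<close> is a chain in \<open>[0,1]\<^sup>2\<close>, and a point of
  \<open>[0,1]\<^sup>2\<close> lies on it iff no point of the image is strictly north-west or south-east of it
  (by the intermediate value theorem for \<open>f + g\<close>). Whether \<open>im f g\<close> has a point strictly
  north-west of \<open>(a, b)\<close> is expressed by the positivity of a formula \<open>sup\<^sub>h \<dots>\<close> built from
  \<open>\<phi>\<^sub>1(f,h)\<close> and \<open>\<phi>\<^sub>r(g,h)\<close>, so all increasing pairs of an indiscernible sequence have the
  same image \<open>S\<close>. For \<open>p < q < r\<close>, \<open>S\<close> is then simultaneously the image of \<open>(f\<^sub>p, f\<^sub>q)\<close>,
  \<open>(f\<^sub>p, f\<^sub>r)\<close> and \<open>(f\<^sub>q, f\<^sub>r)\<close>; comparing points of these three images at the last time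
  \<open>f\<^sub>p\<close> takes a given value puts \<open>(a, a)\<close> or \<open>(b, b)\<close> into \<open>S\<close>.\<close>

lemma closed_contains_cSup:
  fixes S :: "'a::{linorder_topology, conditionally_complete_linorder} set"
  assumes "closed S" "S \<noteq> {}" "bdd_above S"
  shows "Sup S \<in> S"
proof (rule ccontr)
  assume notin: "Sup S \<notin> S"
  obtain s where "s \<in> S" using assms(2) by blast
  then have "s < Sup S" using notin cSup_upper[OF _ assms(3)] by (metis order.order_iff_strict)
  then obtain b where b: "b < Sup S" "{b<..Sup S} \<subseteq> - S"
    using open_left[of "- S" "Sup S" s] assms(1) notin by (auto simp: open_Compl)
  then obtain s' where "s' \<in> S" "b < s'"
    using less_cSup_iff[OF assms(2,3)] by blast
  with b(2) show False using cSup_upper[OF _ assms(3)] by fastforce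
qed

lemma im_swap: "(x, y) \<in> im G F \<longleftrightarrow> (y, x) \<in> im F G"
  unfolding im_def by auto

lemma im_less_imp_le:
  fixes F G :: "'l::linorder \<Rightarrow> real"
  assumes "mono F" "mono G" "(x1, y1) \<in> im F G" "(x2, y2) \<in> im F G" "x1 < x2"
  shows "y1 \<le> y2"
proof -
  obtain t1 t2 where "x1 = F t1" "y1 = G t1" "x2 = F t2" "y2 = G t2"
    using assms(3,4) unfolding im_def by auto
  with assms show ?thesis by (metis linorder_le_cases monoD not_le)
qed

lemma M_spaceD:
  fixes f :: "'l::linorder_topology \<Rightarrow> real"
  assumes "f \<in> M_space"
  shows "mono f" "continuous_on UNIV f"
  using assms unfolding M_space_def by auto

text \<open>With \<open>h\<close> the variable \<open>2\<close>, \<open>nw_form a b r m n\<close> asks for some \<open>h\<close> with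
  \<open>\<phi>\<^sub>1(x\<^sub>m,h) < a\<close>, \<open>b < \<phi>\<^sub>r(x\<^sub>n,h)\<close> and \<open>\<phi>\<^sub>r(x\<^sub>n,h) - \<phi>\<^sub>1(x\<^sub>m,h) > r - 1\<close>. The last condition
  says that \<open>x\<^sub>n + h\<close> reaches \<open>r\<close> before \<open>x\<^sub>m + h\<close> reaches \<open>1\<close>, so the formula detects a point
  of \<open>im x\<^sub>m x\<^sub>n\<close> strictly north-west of \<open>(a, b)\<close>.\<close>

definition nw_conn :: "real \<Rightarrow> real \<Rightarrow> real \<Rightarrow> (nat \<Rightarrow> real) \<Rightarrow> real" where
  "nw_conn a b r v = max 0 (min 1 (min (a - v 0) (min (v 1 - b) (v 1 - v 0 - (r - 1)))))"

definition nw_form :: "real \<Rightarrow> real \<Rightarrow> rat \<Rightarrow> nat \<Rightarrow> nat \<Rightarrow> form" where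
  "nw_form a b r m n = FSup 2 (Conn (nw_conn a b (of_rat r)) [Phi 1 m 2, Phi r n 2])"

lemma wf_nw_form:
  assumes "0 \<le> r" "r \<le> 1"
  shows "wf_form (nw_form a b r m n)"
proof -
  have "continuous_on UNIV (nw_conn a b (of_rat r))"
    unfolding nw_conn_def by (intro continuous_intros continuous_on_product_coordinates)
  then have "continuous_on {v. \<forall>k. v k \<in> {0..1}} (nw_conn a b (of_rat r))"
    by (rule continuous_on_subset) simp
  moreover have "nw_conn a b (of_rat r) v \<in> {0..1}" for v
    unfolding nw_conn_def by simp
  ultimately show ?thesis using assms unfolding nw_form_def by simp
qed

lemma fv_nw_form: "fv (nw_form a b r m n) \<subseteq> {m, n}"
  unfolding nw_form_def by auto

lemma eval_nw_form_pos_iff: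
  fixes e :: "nat \<Rightarrow> 'l::linorder_topology \<Rightarrow> real"
  assumes "(M_space :: ('l \<Rightarrow> real) set) \<noteq> {}" "m \<noteq> 2" "n \<noteq> 2"
  shows "0 < eval (nw_form a b r m n) e \<longleftrightarrow>
    (\<exists>h\<in>M_space. phiML 1 (e m) h < a \<and> b < phiML (of_rat r) (e n) h
       \<and> of_rat r - 1 < phiML (of_rat r) (e n) h - phiML 1 (e m) h)"
proof -
  define W where "W h = nw_conn a b (of_rat r)
    (\<lambda>k. if k = 0 then phiML 1 (e m) h else phiML (of_rat r) (e n) h)" for h
  have "eval (nw_form a b r m n) e = (SUP h\<in>M_space. W h)"
    unfolding nw_form_def eval.simps Let_def W_def
    by (intro SUP_cong refl) (simp add: assms(2,3) nw_conn_def)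
  moreover have "bdd_above (W ` M_space)"
    unfolding W_def nw_conn_def by (intro bdd_aboveI[of _ 1]) auto
  ultimately have "0 < eval (nw_form a b r m n) e \<longleftrightarrow> (\<exists>h\<in>M_space. 0 < W h)"
    using less_cSUP_iff[OF assms(1)] by simp
  moreover have "0 < W h \<longleftrightarrow> phiML 1 (e m) h < a \<and> b < phiML (of_rat r) (e n) h
      \<and> of_rat r - 1 < phiML (of_rat r) (e n) h - phiML 1 (e m) h" for h
    unfolding W_def nw_conn_def by (auto simp: less_max_iff_disj)
  ultimately show ?thesis by simp
qed

lemma indiscernible_pair_eval:
  fixes f :: "'i::linorder \<Rightarrow> 'l::linorder_topology \<Rightarrow> real"
  assumes "indiscernible f" "wf_form \<phi>" "fv \<phi> \<subseteq> {..<2}" "i < j" "p < q"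
  shows "eval \<phi> (\<lambda>k. f (if k = 0 then i else j)) = eval \<phi> (\<lambda>k. f (if k = 0 then p else q))"
proof -
  have "strict_mono_on {..<2} (\<lambda>k::nat. if k = 0 then x else y)" if "x < y" for x y :: 'i
    using that unfolding strict_mono_on_def by auto
  with assms show ?thesis unfolding indiscernible_def by blast
qed

locale continuum_with_endpoints =
  fixes lo hi :: "'l::{linorder_topology, conditionally_complete_linorder}"
  assumes dense: "x < y \<Longrightarrow> \<exists>z. x < z \<and> z < y"
    and lo_le: "lo \<le> x"
    and le_hi: "x \<le> hi"

lemma lin_cont_endpointsE:
  assumes "lin_cont_endpoints TYPE('l)"
  obtains lo hi :: "'l::{linorder_topology, conditionally_complete_linorder}" where "continuum_with_endpoints lo hi"
  using assms unfolding lin_cont_endpoints_def continuum_with_endpoints_def by blast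

context continuum_with_endpoints
begin

lemma mono_INF_eq_lo:
  fixes f :: "'l \<Rightarrow> 'b::conditionally_complete_lattice"
  assumes "mono f"
  shows "(INF t. f t) = f lo"
  by (rule cInf_eq_minimum) (auto intro: monoD[OF assms lo_le])

lemma mono_SUP_eq_hi:
  fixes f :: "'l \<Rightarrow> 'b::conditionally_complete_lattice"
  assumes "mono f"
  shows "(SUP t. f t) = f hi"
  by (rule cSup_eq_maximum) (auto intro: monoD[OF assms le_hi])

lemma M_space_lo: "f \<in> M_space \<Longrightarrow> f lo = 0"
  using mono_INF_eq_lo[of f] unfolding M_space_def by simp

lemma M_space_hi: "f \<in> M_space \<Longrightarrow> f hi = 1"
  using mono_SUP_eq_hi[of f] unfolding M_space_def by simp

lemma M_space_nonneg:
  fixes f :: "'l \<Rightarrow> real"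
  assumes "f \<in> M_space"
  shows "0 \<le> f t"
  using monoD[OF M_spaceD(1)[OF assms] lo_le] M_space_lo[OF assms] by simp

lemma M_space_le_1:
  fixes f :: "'l \<Rightarrow> real"
  assumes "f \<in> M_space"
  shows "f t \<le> 1"
  using monoD[OF M_spaceD(1)[OF assms] le_hi] M_space_hi[OF assms] by simp

lemma M_spaceI:
  assumes "mono f" "continuous_on UNIV f" "f lo = 0" "f hi = 1"
  shows "f \<in> M_space"
  using assms mono_INF_eq_lo[OF assms(1)] mono_SUP_eq_hi[OF assms(1)] unfolding M_space_def by simp

lemma sublevel_has_max:
  fixes g :: "'l \<Rightarrow> 'b::linorder_topology"
  assumes "continuous_on UNIV g" "g t \<le> y"
  obtains T where "g T \<le> y" "\<And>s. g s \<le> y \<Longrightarrow> s \<le> T"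
proof -
  let ?S = "g -` {..y}"
  have "closed ?S" by (rule closed_vimage[OF closed_atMost assms(1)])
  moreover have "?S \<noteq> {}" using assms(2) by blast
  moreover have "bdd_above ?S" by (rule bdd_aboveI[of _ hi]) (rule le_hi)
  ultimately have "Sup ?S \<in> ?S" by (rule closed_contains_cSup)
  show ?thesis
  proof (rule that)
    show "g (Sup ?S) \<le> y" using \<open>Sup ?S \<in> ?S\<close> by simp
    show "s \<le> Sup ?S" if "g s \<le> y" for s
      using that by (intro cSup_upper \<open>bdd_above ?S\<close>) simp
  qed
qed

lemma IVT_lo_hi:
  fixes g :: "'l \<Rightarrow> 'b::linorder_topology"
  assumes cont: "continuous_on UNIV g" and "g lo \<le> y" "y \<le> g hi"
  shows "\<exists>s. g s = y"
proof -
  obtain T where T: "g T \<le> y" "\<And>s. g s \<le> y \<Longrightarrow> s \<le> T"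
    using sublevel_has_max[OF cont \<open>g lo \<le> y\<close>] by blast
  have "y \<le> g T"
  proof (rule ccontr)
    assume "\<not> y \<le> g T"
    then have less: "g T < y" by simp
    then have "T \<noteq> hi" using \<open>y \<le> g hi\<close> by auto
    then have "T < hi" using le_hi[of T] by simp
    moreover have "open (g -` {..<y})" by (rule open_vimage[OF open_lessThan cont])
    moreover have "T \<in> g -` {..<y}" using less by simp
    ultimately obtain b where "T < b" "{T..<b} \<subseteq> g -` {..<y}"
      using open_right by blast
    obtain z where "T < z" "z < b" using dense[OF \<open>T < b\<close>] by blast
    have "z \<in> {T..<b}" using \<open>T < z\<close> \<open>z < b\<close> by simp
    then have "g z < y" using \<open>{T..<b} \<subseteq> g -` {..<y}\<close> by blast
    then have "z \<le> T" by (intro T(2) less_imp_le)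
    with \<open>T < z\<close> show False by simp
  qed
  with T(1) have "g T = y" by (rule antisym)
  then show ?thesis ..
qed

lemma M_space_sum_eq:
  fixes F G :: "'l \<Rightarrow> real"
  assumes "F \<in> M_space" "G \<in> M_space" "0 \<le> \<alpha>" "\<alpha> \<le> 2"
  shows "\<exists>s. F s + G s = \<alpha>"
proof (rule IVT_lo_hi)
  show "continuous_on UNIV (\<lambda>s. F s + G s)"
    using assms(1,2) by (intro continuous_intros M_spaceD(2))
qed (use assms in \<open>simp_all add: M_space_lo M_space_hi\<close>)

lemma phiML_witness:
  fixes F h :: "'l \<Rightarrow> real"
  assumes "F \<in> M_space" "h \<in> M_space" "0 \<le> \<alpha>" "\<alpha> \<le> 2"
  obtains s where "F s + h s = \<alpha>" "phiML \<alpha> F h = F s"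
proof (rule that)
  show "F (SOME s. F s + h s = \<alpha>) + h (SOME s. F s + h s = \<alpha>) = \<alpha>"
    using someI_ex[OF M_space_sum_eq[OF assms]] .
qed (simp add: phiML_def)

lemma mem_imI:
  fixes F G :: "'l \<Rightarrow> real"
  assumes "F \<in> M_space" "G \<in> M_space" "0 \<le> a + b" "a + b \<le> 2"
    and no_NW: "\<And>t. F t < a \<Longrightarrow> G t \<le> b"
    and no_SE: "\<And>t. G t < b \<Longrightarrow> F t \<le> a"
  shows "(a, b) \<in> im F G"
proof -
  obtain s where s: "F s + G s = a + b"
    using M_space_sum_eq[OF assms(1-4)] by blast
  have "\<not> F s < a" using no_NW[of s] s by linarith
  moreover have "\<not> G s < b" using no_SE[of s] s by linarith
  ultimately have "F s = a" "G s = b" using s by linarith+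
  then show ?thesis unfolding im_def by force
qed

lemma M_space_im_bounds:
  fixes F G :: "'l \<Rightarrow> real"
  assumes "F \<in> M_space" "G \<in> M_space" "(x, y) \<in> im F G"
  shows "0 \<le> x" "x \<le> 1" "0 \<le> y" "y \<le> 1"
  using assms M_space_nonneg M_space_le_1 unfolding im_def by auto

text \<open>Let \<open>x = F t\<close> with \<open>F t < a < G t\<close>, and let \<open>T\<close> be the last time at which \<open>F = x\<close>.
  The point \<open>(x, H T)\<close> of \<open>im F H\<close> and the point \<open>(G T, H T)\<close> of \<open>im G H\<close> both lie
  in the chain \<open>im F G\<close>; comparing them with \<open>(x, G T)\<close> forces \<open>H T = G T\<close>,
  and the diagonal point \<open>(G T, G T)\<close> is squeezed to \<open>(b, b)\<close>.\<close>

lemma diagonal_point_of_im_subsets: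
  fixes F G H :: "'l \<Rightarrow> real"
  assumes F: "F \<in> M_space" and G: "G \<in> M_space" and H: "H \<in> M_space"
    and FH: "im F H \<subseteq> im F G" and GH: "im G H \<subseteq> im F G"
    and ab: "(a, b) \<in> im F G" "a < b" and not_aa: "(a, a) \<notin> im F G"
  shows "(b, b) \<in> im F G"
proof -
  note chain = im_less_imp_le[OF M_spaceD(1)[OF F] M_spaceD(1)[OF G]]
  have in_im: "(F s, G s) \<in> im F G" for s unfolding im_def by blast
  obtain t where t: "F t < a" "a < G t"
  proof -
    have "0 \<le> a" "a \<le> 1" using M_space_im_bounds[OF F G ab(1)] by auto
    then obtain t where "(F t < a \<and> a < G t) \<or> (G t < a \<and> a < F t)"
      using mem_imI[OF F G, of a a] not_aa by force
    moreover have "\<not> (G t < a \<and> a < F t)"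
      using chain[OF ab(1) in_im] ab(2) by force
    ultimately show thesis using that by blast
  qed
  define x where "x = F t"
  obtain T where T: "F T \<le> x" "\<And>s. F s \<le> x \<Longrightarrow> s \<le> T"
    using sublevel_has_max[OF M_spaceD(2)[OF F], of t x] x_def by blast
  have "t \<le> T" using T(2) x_def by simp
  then have "x \<le> F T" "G t \<le> G T"
    using M_spaceD(1)[OF F] M_spaceD(1)[OF G] x_def by (auto dest: monoD)
  with T(1) have FT: "F T = x" by simp
  have "(x, H T) \<in> im F G" using FH FT unfolding im_def by blast
  then obtain t' where "F t' = x" "G t' = H T" unfolding im_def by auto
  then have "H T \<le> G T" using T(2) M_spaceD(1)[OF G] by (metis monoD order_refl)
  have xG: "(x, G T) \<in> im F G" using FT in_im by metis
  have GH_pt: "(G T, H T) \<in> im F G" using GH unfolding im_def by blast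
  have "G T \<le> H T" using chain[OF xG GH_pt] t x_def \<open>G t \<le> G T\<close> by linarith
  with \<open>H T \<le> G T\<close> have diag: "(G T, G T) \<in> im F G" using GH_pt by simp
  have "b \<le> G T" using chain[OF ab(1) diag] t \<open>G t \<le> G T\<close> by linarith
  moreover have "G T \<le> b" using chain[OF xG ab(1)] t x_def by linarith
  ultimately show ?thesis using diag by simp
qed

lemma diagonal_point_of_common_im:
  fixes F G H :: "'l \<Rightarrow> real"
  assumes F: "F \<in> M_space" and G: "G \<in> M_space" and H: "H \<in> M_space"
    and FH: "im F H = im F G" and GH: "im G H = im F G" and ab: "(a, b) \<in> im F G"
  shows "(a, a) \<in> im F G \<or> (b, b) \<in> im F G"
proof -
  consider "a < b" | "a = b" | "b < a" by linarith
  then show ?thesis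
  proof cases
    case 1
    then show ?thesis
      using diagonal_point_of_im_subsets[OF F G H _ _ ab] FH GH by blast
  next
    case 2
    then show ?thesis using ab by simp
  next
    case 3
    have swap: "(x, y) \<in> im H G \<longleftrightarrow> (y, x) \<in> im F G"
      "(x, y) \<in> im H F \<longleftrightarrow> (y, x) \<in> im F G"
      "(x, y) \<in> im G F \<longleftrightarrow> (y, x) \<in> im F G" for x y
      using im_swap FH GH by blast+
    then have "im H F \<subseteq> im H G" "im G F \<subseteq> im H G" "(b, a) \<in> im H G"
      using ab by auto
    then show ?thesis
      using diagonal_point_of_im_subsets[OF H G F _ _ _ 3] swap by blast
  qed
qed

lemma ramp_in_M_space:
  fixes g :: "'l \<Rightarrow> real"
  assumes "mono g" "continuous_on UNIV g" "g lo \<le> c" "c + \<delta> \<le> g hi" "0 < \<delta>"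
  shows "(\<lambda>t. min 1 (max 0 ((g t - c) / \<delta>))) \<in> M_space"
proof (rule M_spaceI)
  show "mono (\<lambda>t. min 1 (max 0 ((g t - c) / \<delta>)))"
    using assms(1,5) by (intro monoI min.mono max.mono order_refl divide_right_mono diff_right_mono)
      (auto dest: monoD)
  show "continuous_on UNIV (\<lambda>t. min 1 (max 0 ((g t - c) / \<delta>)))"
    using assms(2,5) by (intro continuous_intros) auto
  show "min 1 (max 0 ((g lo - c) / \<delta>)) = 0"
    using assms(3,5) by (simp add: divide_nonpos_pos)
  show "min 1 (max 0 ((g hi - c) / \<delta>)) = 1"
    using assms(4,5) by (simp add: le_divide_eq)
qed

text \<open>The witness is a steep ramp in \<open>F + G\<close> that vanishes up to time \<open>t\<close>: then
  \<open>G + h\<close> reaches \<open>r \<le> G t\<close> where \<open>h = 0\<close>, while \<open>F + h\<close> reaches \<open>1\<close> before \<open>F\<close> can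
  climb from \<open>F t\<close> to \<open>a\<close>.\<close>

lemma ex_M_space_phiML_lt_eq:
  fixes F G :: "'l \<Rightarrow> real"
  assumes F: "F \<in> M_space" and G: "G \<in> M_space"
    and "F t < a" "a \<le> 1" "0 \<le> r" "r \<le> G t"
  shows "\<exists>h\<in>M_space. phiML 1 F h < a \<and> phiML r G h = r"
proof -
  note monoF = M_spaceD(1)[OF F] and monoG = M_spaceD(1)[OF G]
  define c where "c = F t + G t"
  define \<delta> where "\<delta> = (a - F t) / 2"
  define h where "h = (\<lambda>s. min 1 (max 0 ((F s + G s - c) / \<delta>)))"
  have "0 \<le> F t" "G t \<le> 1" using M_space_nonneg[OF F] M_space_le_1[OF G] .
  then have \<delta>: "0 < \<delta>" "F t + \<delta> < a" "c + \<delta> \<le> 2"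
    using assms(3,4) unfolding \<delta>_def c_def by (simp_all add: field_simps)
  have h: "h \<in> M_space" unfolding h_def
  proof (rule ramp_in_M_space)
    show "mono (\<lambda>s. F s + G s)" using monoF monoG by (intro monoI add_mono) (auto dest: monoD)
    show "continuous_on UNIV (\<lambda>s. F s + G s)"
      using F G by (intro continuous_intros M_spaceD(2))
  qed (use F G \<delta> \<open>0 \<le> F t\<close> M_space_nonneg[OF G, of t] in \<open>simp_all add: M_space_lo M_space_hi c_def\<close>)
  have "h t = 0" unfolding h_def c_def by simp
  have "r \<le> 2" using assms(6) \<open>G t \<le> 1\<close> by simp
  obtain s where s: "G s + h s = r" "phiML r G h = G s"
    using phiML_witness[OF G h \<open>0 \<le> r\<close> \<open>r \<le> 2\<close>] by blast
  have "h s = 0"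
  proof (cases "s \<le> t")
    case True
    then have "h s \<le> h t" using M_spaceD(1)[OF h] by (simp add: monoD)
    then show ?thesis using \<open>h t = 0\<close> M_space_nonneg[OF h, of s] by simp
  next
    case False
    then have "G t \<le> G s" using monoG by (simp add: monoD)
    then show ?thesis using s(1) assms(6) M_space_nonneg[OF h, of s] by linarith
  qed
  with s have "phiML r G h = r" by simp
  moreover obtain s1 where s1: "F s1 + h s1 = 1" "phiML 1 F h = F s1"
    using phiML_witness[OF F h, of 1, simplified] by blast
  have "F s1 < a"
  proof (rule ccontr)
    assume "\<not> F s1 < a"
    then have big: "F t + \<delta> < F s1" using \<delta> by linarith
    have "t \<le> s1"
    proof (rule ccontr)
      assume "\<not> t \<le> s1"
      then have "F s1 \<le> F t" using monoF by (simp add: monoD)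
      with big \<delta>(1) show False by simp
    qed
    then have "G t \<le> G s1" using monoG by (simp add: monoD)
    then have "1 \<le> (F s1 + G s1 - c) / \<delta>" using big \<delta>(1) unfolding c_def by (simp add: le_divide_eq)
    then have "h s1 = 1" unfolding h_def by simp
    with s1(1) big \<delta>(1) \<open>0 \<le> F t\<close> show False by linarith
  qed
  ultimately show ?thesis using h s1(2) by (intro bexI[of _ h]) simp_all
qed

lemma phiML_gap_imp_point:
  fixes F G h :: "'l \<Rightarrow> real"
  assumes F: "F \<in> M_space" and G: "G \<in> M_space" and h: "h \<in> M_space"
    and "0 \<le> r" "r \<le> 2" and gap: "r - 1 < phiML r G h - phiML 1 F h"
  shows "\<exists>s. F s \<le> phiML 1 F h \<and> G s = phiML r G h"
proof -
  obtain s1 where s1: "F s1 + h s1 = 1" "phiML 1 F h = F s1"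
    using phiML_witness[OF F h, of 1, simplified] by blast
  obtain s2 where s2: "G s2 + h s2 = r" "phiML r G h = G s2"
    using phiML_witness[OF G h assms(4,5)] by blast
  have "h s2 < h s1" using gap s1 s2 by linarith
  have "s2 \<le> s1"
  proof (rule ccontr)
    assume "\<not> s2 \<le> s1"
    then have "h s1 \<le> h s2" using M_spaceD(1)[OF h] by (simp add: monoD)
    with \<open>h s2 < h s1\<close> show False by simp
  qed
  then have "F s2 \<le> F s1" using M_spaceD(1)[OF F] by (simp add: monoD)
  then show ?thesis using s1(2) s2(2) by auto
qed

lemma no_NW_point_transfer:
  fixes e e' :: "nat \<Rightarrow> 'l \<Rightarrow> real"
  assumes same: "\<And>\<phi>. wf_form \<phi> \<Longrightarrow> fv \<phi> \<subseteq> {..<2} \<Longrightarrow> eval \<phi> e' = eval \<phi> e"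
    and M: "e m \<in> M_space" "e n \<in> M_space" "e' m \<in> M_space" "e' n \<in> M_space"
    and "m < 2" "n < 2"
    and xy: "(x, y) \<in> im (e m) (e n)" and "e' m t < x"
  shows "e' n t \<le> y"
proof (rule ccontr)
  assume "\<not> e' n t \<le> y"
  then obtain \<rho> :: rat where \<rho>: "y < of_rat \<rho>" "of_rat \<rho> < e' n t"
    using Rats_dense_in_real[of y "e' n t"] by (auto elim: Rats_cases)
  have "0 \<le> y" "x \<le> 1" using M_space_im_bounds[OF M(1,2) xy] by auto
  moreover have "e' n t \<le> 1" using M_space_le_1[OF M(4)] .
  ultimately have \<rho>_real: "0 \<le> real_of_rat \<rho>" "real_of_rat \<rho> \<le> 1" using \<rho> by linarith+
  then have \<rho>01: "0 \<le> \<rho>" "\<rho> \<le> 1" by simp_all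
  let ?\<psi> = "nw_form x y \<rho> m n"
  have wf: "wf_form ?\<psi>" by (rule wf_nw_form[OF \<rho>01])
  have fv: "fv ?\<psi> \<subseteq> {..<2}" using fv_nw_form[of x y \<rho> m n] \<open>m < 2\<close> \<open>n < 2\<close> by auto
  have Mne: "(M_space :: ('l \<Rightarrow> real) set) \<noteq> {}" using M(1) by blast
  obtain h where "h \<in> M_space" "phiML 1 (e' m) h < x" "phiML (of_rat \<rho>) (e' n) h = of_rat \<rho>"
    using ex_M_space_phiML_lt_eq[OF M(3,4) \<open>e' m t < x\<close> \<open>x \<le> 1\<close> \<rho>_real(1)] \<rho>(2) by auto
  then have "0 < eval ?\<psi> e'"
    using eval_nw_form_pos_iff[OF Mne] \<rho>(1) \<open>x \<le> 1\<close> \<open>m < 2\<close> \<open>n < 2\<close> by auto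
  then have "0 < eval ?\<psi> e" using same[OF wf fv] by simp
  then obtain h' where h': "h' \<in> M_space" "phiML 1 (e m) h' < x" "y < phiML (of_rat \<rho>) (e n) h'"
    "of_rat \<rho> - 1 < phiML (of_rat \<rho>) (e n) h' - phiML 1 (e m) h'"
    using eval_nw_form_pos_iff[OF Mne] \<open>m < 2\<close> \<open>n < 2\<close> by auto
  then obtain s where "e m s \<le> phiML 1 (e m) h'" "e n s = phiML (of_rat \<rho>) (e n) h'"
    using phiML_gap_imp_point[OF M(1,2) h'(1) \<rho>_real(1) _ h'(4)] \<rho>_real(2) by auto
  with h' have "e m s < x" "y < e n s" by simp_all
  moreover have "(e m s, e n s) \<in> im (e m) (e n)" unfolding im_def by blast
  ultimately have "e n s \<le> y"
    using im_less_imp_le[OF M_spaceD(1)[OF M(1)] M_spaceD(1)[OF M(2)] _ xy] by blast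
  with \<open>y < e n s\<close> show False by simp
qed

lemma indiscernible_im_subset:
  fixes f :: "'i::linorder \<Rightarrow> 'l \<Rightarrow> real"
  assumes M: "\<forall>k. f k \<in> M_space" and ind: "indiscernible f" and "i < j" "p < q"
  shows "im (f i) (f j) \<subseteq> im (f p) (f q)"
proof clarify
  fix x y assume xy: "(x, y) \<in> im (f i) (f j)"
  define e where "e = (\<lambda>k::nat. f (if k = 0 then i else j))"
  define e' where "e' = (\<lambda>k::nat. f (if k = 0 then p else q))"
  have same: "eval \<phi> e' = eval \<phi> e" if "wf_form \<phi>" "fv \<phi> \<subseteq> {..<2}" for \<phi>
    using indiscernible_pair_eval[OF ind that \<open>i < j\<close> \<open>p < q\<close>] unfolding e_def e'_def by simp
  have eM: "e k \<in> M_space" "e' k \<in> M_space" for k unfolding e_def e'_def using M by auto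
  have "(x, y) \<in> im (e 0) (e 1)" "(y, x) \<in> im (e 1) (e 0)"
    using xy im_swap unfolding e_def by auto
  have "(x, y) \<in> im (e' 0) (e' 1)"
  proof (rule mem_imI[OF eM(2) eM(2)])
    show "0 \<le> x + y" "x + y \<le> 2" using M_space_im_bounds[OF M[rule_format] M[rule_format] xy] by auto
    show "e' 1 t \<le> y" if "e' 0 t < x" for t
      by (rule no_NW_point_transfer[where e = e and e' = e' and m = 0 and n = 1])
        (use same eM \<open>(x, y) \<in> im (e 0) (e 1)\<close> that in auto)
    show "e' 0 t \<le> x" if "e' 1 t < y" for t
      by (rule no_NW_point_transfer[where e = e and e' = e' and m = 1 and n = 0])
        (use same eM \<open>(y, x) \<in> im (e 1) (e 0)\<close> that in auto)
  qed
  then show "(x, y) \<in> im (f p) (f q)" unfolding e'_def by simp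
qed

lemma indiscernible_im_eq:
  fixes f :: "'i::linorder \<Rightarrow> 'l \<Rightarrow> real"
  assumes "\<forall>k. f k \<in> M_space" "indiscernible f" "i < j" "p < q"
  shows "im (f i) (f j) = im (f p) (f q)"
  using indiscernible_im_subset[OF assms(1,2)] assms(3,4) by blast

end

theorem mainTheorem19:
  fixes f :: "'i::linorder \<Rightarrow> ('l::{linorder_topology, conditionally_complete_linorder} \<Rightarrow> real)"
    and i j :: 'i and a b :: real
  assumes "lin_cont_endpoints TYPE('l)"
    and "\<forall>k. f k \<in> M_space"
    and "indiscernible f"
    and "\<exists>p q r::'i. p < q \<and> q < r"
    and "i < j"
    and "(a, b) \<in> im (f i) (f j)"
  shows "(a, a) \<in> im (f i) (f j) \<or> (b, b) \<in> im (f i) (f j)"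
proof -
  obtain lo hi :: 'l where "continuum_with_endpoints lo hi"
    using lin_cont_endpointsE[OF assms(1)] by blast
  then interpret continuum_with_endpoints lo hi .
  obtain p q r :: 'i where "p < q" "q < r" using assms(4) by blast
  then have "p < r" by simp
  have im_eq: "im (f k) (f l) = im (f i) (f j)" if "k < l" for k l
    using indiscernible_im_eq[OF assms(2,3) that assms(5)] .
  have "(a, a) \<in> im (f p) (f q) \<or> (b, b) \<in> im (f p) (f q)"
  proof (rule diagonal_point_of_common_im)
    show "f p \<in> M_space" "f q \<in> M_space" "f r \<in> M_space" using assms(2) by blast+
    show "im (f p) (f r) = im (f p) (f q)" "im (f q) (f r) = im (f p) (f q)"
      "(a, b) \<in> im (f p) (f q)"
      using im_eq[OF \<open>p < q\<close>] im_eq[OF \<open>q < r\<close>] im_eq[OF \<open>p < r\<close>] assms(6) by simp_all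
  qed
  then show ?thesis using im_eq[OF \<open>p < q\<close>] by simp
qed

end
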